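(* Let $X$ be a $T_1$ topological space. The following are equivalent: (1) $T''(X)$ is a regular ring; (2) every prime ideal of $T''(X)$ is maximal; (3) for every $f\in T''(X)$ there exists $g\in T''(X)$ with $Z(f)=X\setminus Z(g)$; (4) for each $Z\in Z''[X]$ there exists a dense cozero set $U$ in $X$ such that $Z\cap U$ is clopen in $U$; (5) every ideal of $T''(X)$ is a $z$-ideal of $T''(X)$; (6) every ideal of $T''(X)$ is an intersection of prime ideals of $T''(X)$; (7) every ideal of $T''(X)$ is an intersection of maximal ideals of $T''(X)$; (8) for all $f,g\in T''(X)$, $\langle f,g\rangle=\langle f^2+g^2\rangle$; (9) every principal ideal of $T''(X)$ is generated by an idempotent.
   Context: $C(X)$ is the ring of real-valued continuous functions on $X$; a cozero set is a set $\{x: h(x)\neq 0\}$ with $h\in C(X)$. $T''(X)$ is the ring (under pointwise operations) of all functions $f\colon X\to\mathbb{R}$ for which there is a dense cozero set $U$ of $X$ with $f|_U$ continuous. For $f\colon X\to\mathbb{R}$, $Z(f)=\{x: f(x)=0\}$, and $Z''[X]=\{Z(f): f\in T''(X)\}$. A commutative ring $R$ is regular if for each $a\in R$ there is $x\in R$ with $a=a^2x$. In a commutative ring with unity, $M(a)$ is the intersection of all maximal ideals containing $a$, and an ideal $I$ is a $z$-ideal if $M(a)\subseteq I$ for all $a\in I$. $\langle\cdot\rangle$ denotes the ideal generated. *)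

theory Defs
  imports "HOL-Analysis.Analysis" "HOL-Algebra.Ideal"
begin

text \<open>The space X is the type 'a (with its topology); X = UNIV.\<close>

definition cozero_set :: "'a::topological_space set \<Rightarrow> bool" where
  "cozero_set U \<longleftrightarrow> (\<exists>h::'a \<Rightarrow> real. continuous_on UNIV h \<and> U = {x. h x \<noteq> 0})"

definition dense_set :: "'a::topological_space set \<Rightarrow> bool" where
  "dense_set U \<longleftrightarrow> closure U = UNIV"

definition Tpp_carrier :: "('a::topological_space \<Rightarrow> real) set" where
  "Tpp_carrier = {f. \<exists>U. cozero_set U \<and> dense_set U \<and> continuous_on U f}"

definition Tpp :: "('a::topological_space \<Rightarrow> real) ring" where
  "Tpp = \<lparr>carrier = Tpp_carrier,
          monoid.mult = (\<lambda>f g x. f x * g x),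
          one = (\<lambda>x. 1),
          zero = (\<lambda>x. 0),
          add = (\<lambda>f g x. f x + g x)\<rparr>"

definition Zset :: "('a \<Rightarrow> real) \<Rightarrow> 'a set" where
  "Zset f = {x. f x = 0}"

definition Zpp :: "'a::topological_space set set" where
  "Zpp = Zset ` Tpp_carrier"

definition regular_ring :: "('b, 'm) ring_scheme \<Rightarrow> bool" where
  "regular_ring R \<longleftrightarrow>
     (\<forall>a \<in> carrier R. \<exists>x \<in> carrier R. a = (a \<otimes>\<^bsub>R\<^esub> a) \<otimes>\<^bsub>R\<^esub> x)"

definition Mset :: "('b, 'm) ring_scheme \<Rightarrow> 'b \<Rightarrow> 'b set" where
  "Mset R a = carrier R \<inter> \<Inter>{M. maximalideal M R \<and> a \<in> M}"

definition z_ideal :: "'b set \<Rightarrow> ('b, 'm) ring_scheme \<Rightarrow> bool" where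
  "z_ideal I R \<longleftrightarrow> ideal I R \<and> (\<forall>a \<in> I. Mset R a \<subseteq> I)"

end

(*
  Except for (3) and (4), the conditions are ring-theoretic characterisations of von Neumann
  regularity: for a regular element f = f^2 x the element e = f x is an idempotent with
  (f) = (e), and every prime ideal is maximal.  Most of them hold in any commutative ring;
  (2) implies regularity only in reduced rings (a prime that is both minimal and maximal
  contains only zero divisors), and (8) needs that a sum of two squares vanishes only
  trivially.  Both hold in T''(X) since its operations are pointwise.  Condition (3) is
  regularity read off zero sets: given g, take x = 1 / (f + g); conversely Z(f) is the
  cozero set of 1 - f x.  Condition (4) is (3) restricted to a dense cozero set on which
  f and g are continuous, g being the indicator function of Z(f).
*)

theory Submission
  imports Defs "HOL-Algebra.Ring_Divisibility"
begin

definition reduced_ring :: "('b, 'm) ring_scheme \<Rightarrow> bool" where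
  "reduced_ring R \<longleftrightarrow> (\<forall>a \<in> carrier R. \<forall>n::nat. a [^]\<^bsub>R\<^esub> n = \<zero>\<^bsub>R\<^esub> \<longrightarrow> a = \<zero>\<^bsub>R\<^esub>)"

lemma (in cring) maximal_ideal_disjoint_from_submonoid_is_prime:
  assumes M: "ideal M R" "M \<inter> S = {}"
    and S: "\<one> \<in> S" "\<And>a b. a \<in> S \<Longrightarrow> b \<in> S \<Longrightarrow> a \<otimes> b \<in> S"
    and maximal: "\<And>J. ideal J R \<Longrightarrow> M \<subseteq> J \<Longrightarrow> J \<inter> S = {} \<Longrightarrow> J = M"
  shows "primeideal M R"
proof -
  have meets_S: "\<exists>m\<in>M. \<exists>x\<in>carrier R. m \<oplus> x \<otimes> a \<in> S"
    if a: "a \<in> carrier R" "a \<notin> M" for a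
  proof -
    have ideals: "ideal (PIdl a) R" "ideal (M <+>\<^bsub>R\<^esub> PIdl a) R"
      using cgenideal_ideal[OF a(1)] add_ideals[OF M(1)] by auto
    have "M \<union> PIdl a \<subseteq> M <+>\<^bsub>R\<^esub> PIdl a"
      using union_genideal[OF M(1) ideals(1)] genideal_self ideal.Icarr[OF M(1)]
        ideal.Icarr[OF ideals(1)] by (metis le_supI subsetI)
    then have "M \<subseteq> M <+>\<^bsub>R\<^esub> PIdl a" "M <+>\<^bsub>R\<^esub> PIdl a \<noteq> M"
      using cgenideal_self[OF a(1)] a(2) by auto
    then obtain y where "y \<in> M <+>\<^bsub>R\<^esub> PIdl a" "y \<in> S"
      using maximal[OF ideals(2)] by blast
    then show ?thesis
      unfolding set_add_def' cgenideal_def by blast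
  qed
  show "primeideal M R"
  proof (rule primeidealI[OF M(1) is_cring])
    show "carrier R \<noteq> M"
      using M(2) S(1) by blast
    fix a b assume ab: "a \<in> carrier R" "b \<in> carrier R" "a \<otimes> b \<in> M"
    show "a \<in> M \<or> b \<in> M"
    proof (rule ccontr)
      assume "\<not> (a \<in> M \<or> b \<in> M)"
      then obtain m1 x1 m2 x2 where m: "m1 \<in> M" "m2 \<in> M"
        and x: "x1 \<in> carrier R" "x2 \<in> carrier R"
        and in_S: "m1 \<oplus> x1 \<otimes> a \<in> S" "m2 \<oplus> x2 \<otimes> b \<in> S"
        using meets_S[OF ab(1)] meets_S[OF ab(2)] by blast
      have carr: "m1 \<in> carrier R" "m2 \<in> carrier R"
        using m ideal.Icarr[OF M(1)] by auto
      have "(m1 \<oplus> x1 \<otimes> a) \<otimes> (m2 \<oplus> x2 \<otimes> b)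
          = m1 \<otimes> (m2 \<oplus> x2 \<otimes> b) \<oplus> (x1 \<otimes> a) \<otimes> m2 \<oplus> (x1 \<otimes> x2) \<otimes> (a \<otimes> b)"
        using carr x ab(1,2) by algebra
      also have "\<dots> \<in> M"
        using m x ab carr ideal.I_r_closed[OF M(1)] ideal.I_l_closed[OF M(1)]
          additive_subgroup.a_closed[OF ideal.axioms(1)[OF M(1)]] by simp
      finally show False
        using S(2)[OF in_S] M(2) by blast
    qed
  qed
qed

lemma (in cring) primeideal_disjoint_from_submonoid:
  assumes I: "ideal I R" "I \<inter> S = {}"
    and S: "\<one> \<in> S" "\<And>a b. a \<in> S \<Longrightarrow> b \<in> S \<Longrightarrow> a \<otimes> b \<in> S"
  obtains Q where "primeideal Q R" "I \<subseteq> Q" "Q \<inter> S = {}"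
proof -
  let ?A = "{J. ideal J R \<and> I \<subseteq> J \<and> J \<inter> S = {}}"
  have "\<exists>M\<in>?A. \<forall>J\<in>?A. M \<subseteq> J \<longrightarrow> J = M"
  proof (rule subset_Zorn_nonempty)
    show "?A \<noteq> {}"
      using I by blast
    fix C assume C: "C \<noteq> {}" "subset.chain ?A C"
    then have chain: "subset.chain {J. ideal J R} C"
      by (auto simp: subset_chain_def)
    have "ideal (\<Union>C) R"
      using chain_Union_is_ideal[OF chain] C(1) by simp
    then show "\<Union>C \<in> ?A"
      using C by (auto simp: subset_chain_def)
  qed
  then obtain M where "M \<in> ?A" and M_max: "\<forall>J\<in>?A. M \<subseteq> J \<longrightarrow> J = M"
    by blast
  then have M: "ideal M R" "I \<subseteq> M" "M \<inter> S = {}"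
    by simp_all
  have maximal: "J = M" if "ideal J R" "M \<subseteq> J" "J \<inter> S = {}" for J
    using M_max that M(2) by blast
  have "primeideal M R"
    using maximal_ideal_disjoint_from_submonoid_is_prime[OF M(1,3) S maximal] .
  with M(2,3) show thesis
    using that by blast
qed

lemma (in cring) regular_ring_iff_mem_Idl_square:
  "regular_ring R \<longleftrightarrow> (\<forall>a\<in>carrier R. a \<in> Idl {a \<otimes> a})"
proof -
  have "a \<in> Idl {a \<otimes> a} \<longleftrightarrow> (\<exists>x\<in>carrier R. a = (a \<otimes> a) \<otimes> x)" if "a \<in> carrier R" for a
    using that by (auto simp: cgenideal_eq_genideal[symmetric] cgenideal_def m_comm)
  then show ?thesis
    unfolding regular_ring_def by blast
qed

lemma (in cring) regular_ring_idempotent: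
  assumes "regular_ring R" "a \<in> carrier R"
  obtains e where "e \<in> carrier R" "e \<otimes> e = e" "a \<otimes> e = a" "e \<in> PIdl a"
proof -
  obtain x where x: "x \<in> carrier R" and a: "(a \<otimes> a) \<otimes> x = a"
    using assms unfolding regular_ring_def by metis
  have "(x \<otimes> a) \<otimes> (x \<otimes> a) = x \<otimes> ((a \<otimes> a) \<otimes> x)"
    using x assms(2) by algebra
  then have "(x \<otimes> a) \<otimes> (x \<otimes> a) = x \<otimes> a"
    by (simp only: a)
  moreover have "a \<otimes> (x \<otimes> a) = (a \<otimes> a) \<otimes> x"
    using x assms(2) by algebra
  ultimately show thesis
    using that x assms(2) a unfolding cgenideal_def by auto
qed

lemma (in cring) regular_ring_iff_Idl_idempotent:
  "regular_ring R \<longleftrightarrow> (\<forall>f\<in>carrier R. \<exists>e\<in>carrier R. e \<otimes> e = e \<and> Idl {f} = Idl {e})"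
proof
  assume regular: "regular_ring R"
  show "\<forall>f\<in>carrier R. \<exists>e\<in>carrier R. e \<otimes> e = e \<and> Idl {f} = Idl {e}"
  proof
    fix f assume f: "f \<in> carrier R"
    obtain e where e: "e \<in> carrier R" "e \<otimes> e = e" "f \<otimes> e = f" "e \<in> PIdl f"
      using regular_ring_idempotent[OF regular f] .
    have "f \<in> PIdl e"
      using e(3) f unfolding cgenideal_def by (metis (mono_tags, lifting) mem_Collect_eq)
    then have "PIdl f = PIdl e"
      using e(4) cgenideal_minimal cgenideal_ideal f e(1) by (simp add: subset_antisym)
    then show "\<exists>e\<in>carrier R. e \<otimes> e = e \<and> Idl {f} = Idl {e}"
      using e(1,2) f by (metis cgenideal_eq_genideal)
  qed
next
  assume idempotents: "\<forall>f\<in>carrier R. \<exists>e\<in>carrier R. e \<otimes> e = e \<and> Idl {f} = Idl {e}"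
  show "regular_ring R"
    unfolding regular_ring_def
  proof
    fix f assume f: "f \<in> carrier R"
    obtain e where e: "e \<in> carrier R" "e \<otimes> e = e" "PIdl f = PIdl e"
      using idempotents f by (metis cgenideal_eq_genideal)
    have "f \<in> PIdl e" "e \<in> PIdl f"
      using e(3) cgenideal_self[OF f] cgenideal_self[OF e(1)] by simp_all
    then obtain r s where rs: "r \<in> carrier R" "s \<in> carrier R" "f = r \<otimes> e" "e = s \<otimes> f"
      unfolding cgenideal_def by blast
    have "(f \<otimes> f) \<otimes> s = (r \<otimes> e) \<otimes> (s \<otimes> f)"
      using rs(1,2) e(1) f by (simp add: rs(3)[symmetric] m_ac)
    also have "\<dots> = r \<otimes> (e \<otimes> e)"
      using rs(1) e(1) by (simp add: rs(4)[symmetric] m_assoc)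
    also have "\<dots> = f"
      using e(2) rs(3) by simp
    finally show "\<exists>x\<in>carrier R. f = (f \<otimes> f) \<otimes> x"
      using rs(2) by metis
  qed
qed

lemma (in cring) regular_ring_primeideal_imp_maximalideal:
  assumes regular: "regular_ring R" and P: "primeideal P R"
  shows "maximalideal P R"
proof (rule maximalidealI)
  show "ideal P R" "carrier R \<noteq> P"
    using P by (simp_all add: primeideal.axioms(1) primeideal.I_notcarr)
  fix J assume J: "ideal J R" "P \<subseteq> J" "J \<subseteq> carrier R"
  show "J = P \<or> J = carrier R"
  proof (rule disjCI)
    assume "J \<noteq> carrier R"
    show "J = P"
    proof (rule ccontr)
      assume "J \<noteq> P"
      then obtain a where a: "a \<in> J" "a \<notin> P"
        using J(2) by blast
      have a_carr: "a \<in> carrier R"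
        using a(1) J(3) by blast
      obtain e where e: "e \<in> carrier R" "e \<otimes> e = e" "a \<otimes> e = a" "e \<in> PIdl a"
        using regular_ring_idempotent[OF regular a_carr] .
      have "a \<otimes> (\<one> \<ominus> e) = a \<ominus> a \<otimes> e"
        using a_carr e(1) by algebra
      then have "a \<otimes> (\<one> \<ominus> e) \<in> P"
        using e(3) a_carr additive_subgroup.zero_closed[OF ideal.axioms(1)[OF primeideal.axioms(1)[OF P]]]
        by (simp add: a_minus_def r_neg)
      then have "\<one> \<ominus> e \<in> J"
        using primeideal.I_prime[OF P a_carr] a(2) e(1) J(2) by blast
      moreover have "e \<in> J"
        using e(4) cgenideal_minimal[OF J(1) a(1)] by blast
      ultimately have "(\<one> \<ominus> e) \<oplus> e \<in> J"
        using additive_subgroup.a_closed[OF ideal.axioms(1)[OF J(1)]] by blast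
      then have "\<one> \<in> J"
        using e(1) by (metis a_minus_def add.inv_closed l_neg a_assoc one_closed r_zero)
      then show False
        using ideal.one_imp_carrier[OF J(1)] \<open>J \<noteq> carrier R\<close> by blast
    qed
  qed
qed

lemma (in cring) reduced_minimal_primeideal_annihilator:
  assumes reduced: "reduced_ring R" and P: "primeideal P R" "a \<in> P"
    and minimal: "\<And>Q. primeideal Q R \<Longrightarrow> Q \<subseteq> P \<Longrightarrow> Q = P"
  obtains s where "s \<in> carrier R - P" "s \<otimes> a = \<zero>"
proof (rule ccontr)
  assume no_annihilator: "\<not> thesis"
  have a: "a \<in> carrier R"
    using ideal.Icarr[OF primeideal.axioms(1)[OF P(1)] P(2)] .
  have one: "\<one> \<in> carrier R - P"
    using ideal.one_imp_carrier[OF primeideal.axioms(1)] primeideal.I_notcarr P(1) by blast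
  \<comment> \<open>a prime avoiding \<open>S\<close> lies inside \<open>P\<close> but misses \<open>a\<close>; reducedness keeps \<open>\<zero>\<close> out of \<open>S\<close>\<close>
  define S where "S = {s \<otimes> a [^] (n::nat) | s n. s \<in> carrier R - P}"
  have in_S: "s \<otimes> a [^] (n::nat) \<in> S" if "s \<in> carrier R - P" for s n
    using that unfolding S_def by blast
  have "{\<zero>} \<inter> S = {}"
  proof (rule ccontr)
    assume "{\<zero>} \<inter> S \<noteq> {}"
    then obtain s and n :: nat where s: "s \<in> carrier R - P" and zero: "s \<otimes> a [^] n = \<zero>"
      unfolding S_def by auto
    have "(s \<otimes> a) [^] Suc n = (s [^] n \<otimes> a) \<otimes> (s \<otimes> a [^] n)"
      using s a by (simp add: nat_pow_distrib m_ac)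
    then have "(s \<otimes> a) [^] Suc n = \<zero>"
      using zero s a by simp
    then have "s \<otimes> a = \<zero>"
      using reduced s a unfolding reduced_ring_def by blast
    then show False
      using no_annihilator that s by blast
  qed
  moreover have "\<one> \<in> S"
    using in_S[OF one, of 0] by simp
  moreover have "x \<otimes> y \<in> S" if x: "x \<in> S" and y: "y \<in> S" for x y
  proof -
    obtain s m where s: "s \<in> carrier R - P" "x = s \<otimes> a [^] (m::nat)"
      using x unfolding S_def by blast
    obtain t n where t: "t \<in> carrier R - P" "y = t \<otimes> a [^] (n::nat)"
      using y unfolding S_def by blast
    have "x \<otimes> y = (s \<otimes> t) \<otimes> a [^] (m + n)"
      using s t a by (simp add: nat_pow_mult[symmetric] m_ac)
    moreover have "s \<otimes> t \<in> carrier R - P"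
      using s(1) t(1) primeideal.I_prime[OF P(1)] by auto
    ultimately show ?thesis
      using in_S by simp
  qed
  ultimately obtain Q where Q: "primeideal Q R" "{\<zero>} \<subseteq> Q" "Q \<inter> S = {}"
    by (rule primeideal_disjoint_from_submonoid[OF zeroideal])
  have "Q \<subseteq> P"
  proof
    fix q assume q: "q \<in> Q"
    show "q \<in> P"
    proof (rule ccontr)
      assume "q \<notin> P"
      then have "q \<in> S"
        using in_S[of q 0] ideal.Icarr[OF primeideal.axioms(1)[OF Q(1)] q] by simp
      then show False
        using q Q(3) by blast
    qed
  qed
  moreover have "a \<notin> Q"
    using in_S[OF one, of 1] a Q(3) by auto
  ultimately show False
    using minimal[OF Q(1)] P(2) by blast
qed

lemma (in cring) regular_ring_if_reduced_and_primeideals_maximal: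
  assumes reduced: "reduced_ring R"
    and prime_maximal: "\<forall>P. primeideal P R \<longrightarrow> maximalideal P R"
  shows "regular_ring R"
  unfolding regular_ring_def
proof
  fix a assume a: "a \<in> carrier R"
  define Ann where "Ann = {x \<in> carrier R. a \<otimes> x \<in> {\<zero>}}"
  have ideals: "ideal (PIdl a) R" "ideal Ann R"
    using cgenideal_ideal[OF a] ideal.helper_max_prime[OF zeroideal is_cring a]
    unfolding Ann_def by simp_all
  define J where "J = PIdl a <+>\<^bsub>R\<^esub> Ann"
  have "\<one> \<in> J"
  proof (rule ccontr)
    assume "\<one> \<notin> J"
    obtain P where P: "primeideal P R" "J \<subseteq> P" "P \<inter> {\<one>} = {}"
      by (rule primeideal_disjoint_from_submonoid[OF add_ideals[OF ideals],
            where S = "{\<one>}", folded J_def])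
        (use \<open>\<one> \<notin> J\<close> in auto)
    have "PIdl a \<union> Ann \<subseteq> J"
      using union_genideal[OF ideals] genideal_self ideal.Icarr[OF ideals(1)]
        ideal.Icarr[OF ideals(2)] unfolding J_def by (metis le_supI subsetI)
    then have "a \<in> P" "Ann \<subseteq> P"
      using P(2) cgenideal_self[OF a] by auto
    \<comment> \<open>as every prime is maximal, \<open>P\<close> is a minimal prime, so some \<open>s \<notin> P\<close> kills \<open>a\<close>;
      but then \<open>s \<in> Ann \<subseteq> P\<close>\<close>
    moreover have "Q = P" if "primeideal Q R" "Q \<subseteq> P" for Q
      using maximalideal.I_maximal[OF prime_maximal[rule_format, OF that(1)]
          primeideal.axioms(1)[OF P(1)] that(2)]
        primeideal.I_notcarr[OF P(1)] ideal.Icarr[OF primeideal.axioms(1)[OF P(1)]]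
      by blast
    ultimately obtain s where "s \<in> carrier R - P" "s \<otimes> a = \<zero>"
      using reduced_minimal_primeideal_annihilator[OF reduced P(1)] by blast
    then show False
      using \<open>Ann \<subseteq> P\<close> a unfolding Ann_def by (auto simp: m_comm)
  qed
  then obtain r s where r: "r \<in> carrier R" and s: "s \<in> carrier R" "a \<otimes> s = \<zero>"
    and one: "\<one> = r \<otimes> a \<oplus> s"
    unfolding J_def set_add_def' cgenideal_def Ann_def by blast
  have "a = a \<otimes> (r \<otimes> a \<oplus> s)"
    using a by (simp flip: one)
  also have "\<dots> = (a \<otimes> a) \<otimes> r \<oplus> a \<otimes> s"
    using a r s(1) by algebra
  finally show "\<exists>x\<in>carrier R. a = (a \<otimes> a) \<otimes> x"
    using r s a by auto
qed

lemma (in cring) regular_ring_ideal_eq_Inter_maximalideals: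
  assumes regular: "regular_ring R" and I: "ideal I R"
  shows "I = carrier R \<inter> \<Inter>{M. maximalideal M R \<and> I \<subseteq> M}"
proof
  show "I \<subseteq> carrier R \<inter> \<Inter>{M. maximalideal M R \<and> I \<subseteq> M}"
    using ideal.Icarr[OF I] by blast
  show "carrier R \<inter> \<Inter>{M. maximalideal M R \<and> I \<subseteq> M} \<subseteq> I"
  proof
    fix a assume a: "a \<in> carrier R \<inter> \<Inter>{M. maximalideal M R \<and> I \<subseteq> M}"
    show "a \<in> I"
    proof (rule ccontr)
      assume "a \<notin> I"
      obtain e where e: "e \<in> carrier R" "e \<otimes> e = e" "a \<otimes> e = a" "e \<in> PIdl a"
        using regular_ring_idempotent[OF regular] a by blast
      have "e \<notin> I"
        using ideal.I_l_closed[OF I, of e a] e(3) a \<open>a \<notin> I\<close> by auto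
      moreover have "\<one> \<notin> I"
        using ideal.one_imp_carrier[OF I] a \<open>a \<notin> I\<close> by blast
      ultimately have disjoint: "I \<inter> {\<one>, e} = {}"
        by blast
      have closed: "x \<otimes> y \<in> {\<one>, e}" if "x \<in> {\<one>, e}" "y \<in> {\<one>, e}" for x y
        using that e(1,2) by auto
      obtain Q where Q: "primeideal Q R" "I \<subseteq> Q" "Q \<inter> {\<one>, e} = {}"
        by (rule primeideal_disjoint_from_submonoid[OF I disjoint _ closed]) simp
      have "maximalideal Q R"
        using regular_ring_primeideal_imp_maximalideal[OF regular Q(1)] .
      then have "a \<in> Q"
        using a Q(2) by blast
      then show False
        using cgenideal_minimal[OF primeideal.axioms(1)[OF Q(1)]] e(4) Q(3) by blast
    qed
  qed
qed

lemma (in cring) regular_ring_iff_primeideals_maximal: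
  assumes "reduced_ring R"
  shows "regular_ring R \<longleftrightarrow> (\<forall>P. primeideal P R \<longrightarrow> maximalideal P R)"
  using regular_ring_primeideal_imp_maximalideal
    regular_ring_if_reduced_and_primeideals_maximal[OF assms] by blast

lemma (in cring) regular_ring_iff_ideals_Inter_maximalideals:
  "regular_ring R \<longleftrightarrow>
     (\<forall>I. ideal I R \<longrightarrow> (\<exists>\<M>. (\<forall>M\<in>\<M>. maximalideal M R) \<and> I = carrier R \<inter> \<Inter>\<M>))"
proof (intro iffI allI impI)
  fix I assume "regular_ring R" "ideal I R"
  then show "\<exists>\<M>. (\<forall>M\<in>\<M>. maximalideal M R) \<and> I = carrier R \<inter> \<Inter>\<M>"
    by (intro exI[of _ "{M. maximalideal M R \<and> I \<subseteq> M}"] conjI)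
      (simp_all add: regular_ring_ideal_eq_Inter_maximalideals[symmetric])
next
  assume Inter_maximal:
    "\<forall>I. ideal I R \<longrightarrow> (\<exists>\<M>. (\<forall>M\<in>\<M>. maximalideal M R) \<and> I = carrier R \<inter> \<Inter>\<M>)"
  show "regular_ring R"
    unfolding regular_ring_iff_mem_Idl_square
  proof
    fix a assume a: "a \<in> carrier R"
    then have square: "a \<otimes> a \<in> carrier R"
      by simp
    obtain \<M> where \<M>: "\<forall>M\<in>\<M>. maximalideal M R" "Idl {a \<otimes> a} = carrier R \<inter> \<Inter>\<M>"
      using Inter_maximal genideal_ideal[of "{a \<otimes> a}"] square by auto
    have "a \<in> M" if "M \<in> \<M>" for M
      using primeideal.I_prime[OF maximalideal_prime[OF \<M>(1)[rule_format, OF that]] a a]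
        genideal_self'[OF square] \<M>(2) that by blast
    then show "a \<in> Idl {a \<otimes> a}"
      using \<M>(2) a by blast
  qed
qed

lemma (in cring) regular_ring_iff_ideals_Inter_primeideals:
  "regular_ring R \<longleftrightarrow>
     (\<forall>I. ideal I R \<longrightarrow> (\<exists>\<P>. (\<forall>P\<in>\<P>. primeideal P R) \<and> I = carrier R \<inter> \<Inter>\<P>))"
proof (intro iffI allI impI)
  fix I assume "regular_ring R" "ideal I R"
  then obtain \<M> where "\<forall>M\<in>\<M>. maximalideal M R" "I = carrier R \<inter> \<Inter>\<M>"
    using regular_ring_iff_ideals_Inter_maximalideals by blast
  then show "\<exists>\<P>. (\<forall>P\<in>\<P>. primeideal P R) \<and> I = carrier R \<inter> \<Inter>\<P>"
    using maximalideal_prime by (intro exI[of _ \<M>]) simp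
next
  assume Inter_prime:
    "\<forall>I. ideal I R \<longrightarrow> (\<exists>\<P>. (\<forall>P\<in>\<P>. primeideal P R) \<and> I = carrier R \<inter> \<Inter>\<P>)"
  show "regular_ring R"
    unfolding regular_ring_iff_mem_Idl_square
  proof
    fix a assume a: "a \<in> carrier R"
    then have square: "a \<otimes> a \<in> carrier R"
      by simp
    obtain \<P> where \<P>: "\<forall>P\<in>\<P>. primeideal P R" "Idl {a \<otimes> a} = carrier R \<inter> \<Inter>\<P>"
      using Inter_prime genideal_ideal[of "{a \<otimes> a}"] square by auto
    have "a \<in> P" if "P \<in> \<P>" for P
      using primeideal.I_prime[OF \<P>(1)[rule_format, OF that] a a]
        genideal_self'[OF square] \<P>(2) that by blast
    then show "a \<in> Idl {a \<otimes> a}"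
      using \<P>(2) a by blast
  qed
qed

lemma (in cring) regular_ring_iff_ideals_z_ideals:
  "regular_ring R \<longleftrightarrow> (\<forall>I. ideal I R \<longrightarrow> z_ideal I R)"
proof (intro iffI allI impI)
  fix I assume "regular_ring R" "ideal I R"
  then obtain \<M> where "\<forall>M\<in>\<M>. maximalideal M R" "I = carrier R \<inter> \<Inter>\<M>"
    using regular_ring_iff_ideals_Inter_maximalideals by blast
  then show "z_ideal I R"
    using \<open>ideal I R\<close> unfolding z_ideal_def Mset_def by blast
next
  assume z_ideals: "\<forall>I. ideal I R \<longrightarrow> z_ideal I R"
  show "regular_ring R"
    unfolding regular_ring_iff_mem_Idl_square
  proof
    fix a assume a: "a \<in> carrier R"
    then have square: "a \<otimes> a \<in> carrier R"
      by simp
    have "a \<in> M" if "maximalideal M R" "a \<otimes> a \<in> M" for M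
      using primeideal.I_prime[OF maximalideal_prime[OF that(1)] a a] that(2) by blast
    then have "a \<in> Mset R (a \<otimes> a)"
      using a unfolding Mset_def by blast
    moreover have "Mset R (a \<otimes> a) \<subseteq> Idl {a \<otimes> a}"
      using z_ideals genideal_ideal[of "{a \<otimes> a}"] genideal_self'[OF square] square
      unfolding z_ideal_def by auto
    ultimately show "a \<in> Idl {a \<otimes> a}"
      by blast
  qed
qed

lemma (in cring) regular_ring_Idl_pair_eq_Idl_sum_squares:
  assumes regular: "regular_ring R"
    and squares: "\<forall>a\<in>carrier R. \<forall>b\<in>carrier R. a \<otimes> a \<oplus> b \<otimes> b = \<zero> \<longrightarrow> a = \<zero>"
    and f: "f \<in> carrier R" and g: "g \<in> carrier R"
  shows "Idl {f, g} = Idl {f \<otimes> f \<oplus> g \<otimes> g}"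
proof
  define k where "k = f \<otimes> f \<oplus> g \<otimes> g"
  have k: "k \<in> carrier R"
    using f g unfolding k_def by simp
  obtain e where e: "e \<in> carrier R" "e \<otimes> e = e" "k \<otimes> e = k" "e \<in> PIdl k"
    using regular_ring_idempotent[OF regular k] by blast
  have "(f \<ominus> f \<otimes> e) \<otimes> (f \<ominus> f \<otimes> e) \<oplus> (g \<ominus> g \<otimes> e) \<otimes> (g \<ominus> g \<otimes> e)
      = (k \<ominus> k \<otimes> e) \<otimes> (\<one> \<ominus> e)"
    using f g e(1) unfolding k_def by algebra
  also have "\<dots> = \<zero>"
    using k e(1) by (simp add: e(3) a_minus_def r_neg)
  finally have "f \<ominus> f \<otimes> e = \<zero>" "g \<ominus> g \<otimes> e = \<zero>"
    using squares[rule_format] f g e(1) a_comm by (metis minus_closed m_closed)+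
  moreover have "x = (x \<ominus> x \<otimes> e) \<oplus> x \<otimes> e" if "x \<in> carrier R" for x
    using that e(1) by algebra
  ultimately have "f = f \<otimes> e" "g = g \<otimes> e"
    using f g e(1) by (metis l_zero m_closed)+
  then have "{f, g} \<subseteq> PIdl k"
    using ideal.I_l_closed[OF cgenideal_ideal[OF k] e(4)] f g by (metis empty_subsetI insert_subset)
  then show "Idl {f, g} \<subseteq> Idl {f \<otimes> f \<oplus> g \<otimes> g}"
    using genideal_minimal[OF cgenideal_ideal[OF k]] cgenideal_eq_genideal[OF k]
    unfolding k_def by simp
next
  have "f \<in> Idl {f, g}" "g \<in> Idl {f, g}"
    using genideal_self[of "{f, g}"] f g by auto
  then have "f \<otimes> f \<oplus> g \<otimes> g \<in> Idl {f, g}"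
    using genideal_ideal[of "{f, g}"] f g ideal.I_l_closed
      additive_subgroup.a_closed[OF ideal.axioms(1)] by (metis empty_subsetI insert_subset)
  then show "Idl {f \<otimes> f \<oplus> g \<otimes> g} \<subseteq> Idl {f, g}"
    using genideal_minimal[OF genideal_ideal[of "{f, g}"]] f g by simp
qed

lemma (in cring) regular_ring_iff_Idl_pair_eq_Idl_sum_squares:
  assumes "\<forall>a\<in>carrier R. \<forall>b\<in>carrier R. a \<otimes> a \<oplus> b \<otimes> b = \<zero> \<longrightarrow> a = \<zero>"
  shows "regular_ring R \<longleftrightarrow>
    (\<forall>f\<in>carrier R. \<forall>g\<in>carrier R. Idl {f, g} = Idl {f \<otimes> f \<oplus> g \<otimes> g})"
proof (intro iffI ballI)
  fix f g assume "regular_ring R" "f \<in> carrier R" "g \<in> carrier R"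
  then show "Idl {f, g} = Idl {f \<otimes> f \<oplus> g \<otimes> g}"
    using regular_ring_Idl_pair_eq_Idl_sum_squares assms by blast
next
  assume pairs: "\<forall>f\<in>carrier R. \<forall>g\<in>carrier R. Idl {f, g} = Idl {f \<otimes> f \<oplus> g \<otimes> g}"
  show "regular_ring R"
    unfolding regular_ring_iff_mem_Idl_square
  proof
    fix a assume a: "a \<in> carrier R"
    have "Idl {a, \<zero>} = Idl {a \<otimes> a}"
      using pairs a by (metis zero_closed l_null r_zero m_closed)
    then show "a \<in> Idl {a \<otimes> a}"
      using genideal_self[of "{a, \<zero>}"] a by auto
  qed
qed

lemma Tpp_simps [simp]:
  "carrier Tpp = Tpp_carrier"
  "f \<otimes>\<^bsub>Tpp\<^esub> g = (\<lambda>x. f x * g x)"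
  "f \<oplus>\<^bsub>Tpp\<^esub> g = (\<lambda>x. f x + g x)"
  "\<one>\<^bsub>Tpp\<^esub> = (\<lambda>x. 1)"
  "\<zero>\<^bsub>Tpp\<^esub> = (\<lambda>x. 0)"
  by (simp_all add: Tpp_def)

lemma cozero_set_imp_open: "cozero_set U \<Longrightarrow> open U"
  unfolding cozero_set_def using open_Collect_neq[OF _ continuous_on_const] by blast

lemma cozero_set_Int:
  assumes "cozero_set U" "cozero_set V"
  shows "cozero_set (U \<inter> V)"
proof -
  obtain h k :: "'a \<Rightarrow> real" where
    "continuous_on UNIV h" "U = {x. h x \<noteq> 0}" "continuous_on UNIV k" "V = {x. k x \<noteq> 0}"
    using assms unfolding cozero_set_def by blast
  then show ?thesis
    unfolding cozero_set_def by (intro exI[of _ "\<lambda>x. h x * k x"]) (auto intro: continuous_intros)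
qed

lemma dense_set_Int_open:
  assumes "open U" "dense_set U" "dense_set V"
  shows "dense_set (U \<inter> V)"
  using closure_open_Int_superset[OF assms(1), of V] assms(2,3) unfolding dense_set_def by simp

lemma Tpp_carrierI:
  "cozero_set U \<Longrightarrow> dense_set U \<Longrightarrow> continuous_on U f \<Longrightarrow> f \<in> Tpp_carrier"
  unfolding Tpp_carrier_def by blast

lemma Tpp_carrierE:
  assumes "f \<in> Tpp_carrier"
  obtains U where "cozero_set U" "dense_set U" "continuous_on U f"
  using assms unfolding Tpp_carrier_def by blast

lemma Tpp_carrier_continuous_on_common:
  assumes "f \<in> Tpp_carrier" "g \<in> Tpp_carrier"
  obtains U where "cozero_set U" "dense_set U" "continuous_on U f" "continuous_on U g"
proof -
  obtain U V where U: "cozero_set U" "dense_set U" "continuous_on U f"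
    and V: "cozero_set V" "dense_set V" "continuous_on V g"
    using assms by (meson Tpp_carrierE)
  show thesis
  proof (rule that[of "U \<inter> V"])
    show "cozero_set (U \<inter> V)" "dense_set (U \<inter> V)"
      using cozero_set_Int dense_set_Int_open cozero_set_imp_open U V by blast+
    show "continuous_on (U \<inter> V) f" "continuous_on (U \<inter> V) g"
      using U(3) V(3) by (auto intro: continuous_on_subset)
  qed
qed

lemma Tpp_carrier_combine:
  assumes "f \<in> Tpp_carrier" "g \<in> Tpp_carrier"
    and "\<And>U. continuous_on U f \<Longrightarrow> continuous_on U g \<Longrightarrow> continuous_on U h"
  shows "h \<in> Tpp_carrier"
  using Tpp_carrier_continuous_on_common[OF assms(1,2)] assms(3) Tpp_carrierI by metis

lemma Tpp_carrier_const [simp]: "(\<lambda>x. c) \<in> Tpp_carrier"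
proof (rule Tpp_carrierI)
  show "cozero_set UNIV"
    unfolding cozero_set_def by (intro exI[of _ "\<lambda>x. 1"]) auto
qed (simp_all add: dense_set_def)

lemma Tpp_carrier_add [simp]:
  "f \<in> Tpp_carrier \<Longrightarrow> g \<in> Tpp_carrier \<Longrightarrow> (\<lambda>x. f x + g x) \<in> Tpp_carrier"
  by (rule Tpp_carrier_combine[of f g]) (auto intro: continuous_intros)

lemma Tpp_carrier_diff [simp]:
  "f \<in> Tpp_carrier \<Longrightarrow> g \<in> Tpp_carrier \<Longrightarrow> (\<lambda>x. f x - g x) \<in> Tpp_carrier"
  by (rule Tpp_carrier_combine[of f g]) (auto intro: continuous_intros)

lemma Tpp_carrier_mult [simp]:
  "f \<in> Tpp_carrier \<Longrightarrow> g \<in> Tpp_carrier \<Longrightarrow> (\<lambda>x. f x * g x) \<in> Tpp_carrier"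
  by (rule Tpp_carrier_combine[of f g]) (auto intro: continuous_intros)

lemma Tpp_carrier_uminus [simp]: "f \<in> Tpp_carrier \<Longrightarrow> (\<lambda>x. - f x) \<in> Tpp_carrier"
  by (erule Tpp_carrier_combine[OF _ Tpp_carrier_const]) (auto intro: continuous_intros)

lemma Tpp_carrier_inverse:
  "f \<in> Tpp_carrier \<Longrightarrow> (\<And>x. f x \<noteq> 0) \<Longrightarrow> (\<lambda>x. inverse (f x)) \<in> Tpp_carrier"
  by (erule Tpp_carrier_combine[OF _ Tpp_carrier_const]) (auto intro: continuous_intros)

lemma cring_Tpp: "cring (Tpp :: ('a::topological_space \<Rightarrow> real) ring)"
proof (rule cringI)
  show "abelian_group (Tpp :: ('a \<Rightarrow> real) ring)"
    by (rule abelian_groupI) (auto simp: algebra_simps intro!: bexI[of _ "\<lambda>x. - _ x"])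
  show "comm_monoid (Tpp :: ('a \<Rightarrow> real) ring)"
    by (rule comm_monoidI) (auto simp: algebra_simps)
qed (auto simp: algebra_simps)

lemma Tpp_nat_pow: "f [^]\<^bsub>Tpp\<^esub> (n::nat) = (\<lambda>x. f x ^ n)"
  by (induction n) (simp_all add: Tpp_def mult.commute)

lemma reduced_ring_Tpp: "reduced_ring Tpp"
  unfolding reduced_ring_def Tpp_nat_pow by (auto simp: fun_eq_iff)

lemma Tpp_sum_squares_eq_zero:
  "f \<otimes>\<^bsub>Tpp\<^esub> f \<oplus>\<^bsub>Tpp\<^esub> g \<otimes>\<^bsub>Tpp\<^esub> g = \<zero>\<^bsub>Tpp\<^esub> \<Longrightarrow> f = \<zero>\<^bsub>Tpp\<^esub>"
  by (simp add: fun_eq_iff sum_squares_eq_zero_iff)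

lemma regular_ring_Tpp_iff_Zset_complement:
  "regular_ring (Tpp :: ('a::topological_space \<Rightarrow> real) ring) \<longleftrightarrow>
     (\<forall>f\<in>carrier Tpp. \<exists>g\<in>carrier Tpp. Zset f = UNIV - Zset (g :: 'a \<Rightarrow> real))"
  (is "_ \<longleftrightarrow> ?complement")
proof
  assume regular: "regular_ring (Tpp :: ('a \<Rightarrow> real) ring)"
  show ?complement
  proof
    fix f :: "'a \<Rightarrow> real" assume f: "f \<in> carrier Tpp"
    obtain u where u: "u \<in> Tpp_carrier" "\<And>x. f x = f x * f x * u x"
      using regular f unfolding regular_ring_def by (auto simp: fun_eq_iff)
    have "f x * u x = 1" if "f x \<noteq> 0" for x
      using u(2)[of x] that by (metis mult.assoc mult_cancel_left1)
    then have "Zset f = UNIV - Zset (\<lambda>x. 1 - f x * u x)"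
      by (auto simp: Zset_def)
    moreover have "(\<lambda>x. 1 - f x * u x) \<in> Tpp_carrier"
      using f u(1) by simp
    ultimately show "\<exists>g\<in>carrier Tpp. Zset f = UNIV - Zset g"
      by auto
  qed
next
  assume complement: ?complement
  show "regular_ring (Tpp :: ('a \<Rightarrow> real) ring)"
    unfolding regular_ring_def
  proof
    fix f :: "'a \<Rightarrow> real" assume f: "f \<in> carrier Tpp"
    obtain g where g: "g \<in> Tpp_carrier" and fg: "\<And>x. f x = 0 \<longleftrightarrow> g x \<noteq> 0"
      using complement f by (fastforce simp: Zset_def)
    have "f x + g x \<noteq> 0" for x
      using fg[of x] by auto
    then have "(\<lambda>x. inverse (f x + g x)) \<in> carrier Tpp"
      using f g by (simp add: Tpp_carrier_inverse)
    moreover have "f x = f x * f x * inverse (f x + g x)" for x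
      using fg[of x] by (cases "f x = 0") (simp_all add: field_simps)
    then have "f = f \<otimes>\<^bsub>Tpp\<^esub> f \<otimes>\<^bsub>Tpp\<^esub> (\<lambda>x. inverse (f x + g x))"
      by (simp add: fun_eq_iff)
    ultimately show "\<exists>u\<in>carrier Tpp. f = f \<otimes>\<^bsub>Tpp\<^esub> f \<otimes>\<^bsub>Tpp\<^esub> u"
      by blast
  qed
qed

lemma Zset_clopen_in_dense_cozero_set:
  assumes "f \<in> Tpp_carrier" "g \<in> Tpp_carrier" "Zset f = UNIV - Zset g"
  obtains U where "cozero_set U" "dense_set U"
    "openin (top_of_set U) (Zset f \<inter> U)" "closedin (top_of_set U) (Zset f \<inter> U)"
proof -
  obtain U where U: "cozero_set U" "dense_set U" "continuous_on U f" "continuous_on U g"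
    using Tpp_carrier_continuous_on_common[OF assms(1,2)] .
  have "closedin (top_of_set U) ({x \<in> U. f x = 0})"
    by (rule continuous_closedin_preimage_constant[OF U(3)])
  moreover have "openin (top_of_set U) (U \<inter> g -` (- {0}))"
    by (rule continuous_openin_preimage_gen[OF U(4)]) auto
  moreover have "Zset f \<inter> U = {x \<in> U. f x = 0}" "Zset f \<inter> U = U \<inter> g -` (- {0})"
    using assms(3) by (auto simp: Zset_def)
  ultimately show thesis
    using that U(1,2) by simp
qed

lemma Zset_complement_if_clopen_in_dense_cozero_set:
  assumes U: "cozero_set U" "dense_set U"
    and clopen: "openin (top_of_set U) (Zset f \<inter> U)" "closedin (top_of_set U) (Zset f \<inter> U)"
  obtains g where "g \<in> Tpp_carrier" "Zset f = UNIV - Zset g"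
proof
  let ?g = "\<lambda>x. if f x = 0 then 1 else 0 :: real"
  define A where "A = Zset f \<inter> U"
  define B where "B = U - Zset f"
  have U_eq: "A \<union> B = U"
    unfolding A_def B_def by blast
  have "B = U - (Zset f \<inter> U)"
    unfolding B_def by blast
  then have "closedin (top_of_set U) A" "closedin (top_of_set U) B"
    using clopen closedin_diff[OF closedin_topspace clopen(1)] unfolding A_def by simp_all
  then have "continuous_on (A \<union> B) ?g"
  proof (intro continuous_on_cases_local)
    show "(1::real) = 0" if "x \<in> A \<and> f x \<noteq> 0 \<or> x \<in> B \<and> f x = 0" for x
      using that unfolding A_def B_def Zset_def by auto
  qed (simp_all add: U_eq)
  then show "?g \<in> Tpp_carrier"
    using Tpp_carrierI[OF U] U_eq by simp
  show "Zset f = UNIV - Zset ?g"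
    by (auto simp: Zset_def)
qed

lemma Zset_complement_iff_clopen_in_dense_cozero_set:
  "(\<forall>f\<in>carrier Tpp. \<exists>g\<in>carrier Tpp. Zset f = UNIV - Zset (g :: 'a::topological_space \<Rightarrow> real)) \<longleftrightarrow>
   (\<forall>Z\<in>(Zpp :: 'a set set). \<exists>U. cozero_set U \<and> dense_set U \<and>
      openin (top_of_set U) (Z \<inter> U) \<and> closedin (top_of_set U) (Z \<inter> U))"
  (is "?complement \<longleftrightarrow> ?clopen")
proof
  assume ?complement
  show ?clopen
  proof
    fix Z :: "'a set" assume "Z \<in> Zpp"
    then obtain f where f: "f \<in> Tpp_carrier" "Z = Zset f"
      unfolding Zpp_def by blast
    obtain g where "g \<in> Tpp_carrier" "Zset f = UNIV - Zset g"
      using bspec[OF \<open>?complement\<close>[unfolded Tpp_simps] f(1)] ..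
    then obtain U where "cozero_set U" "dense_set U"
      "openin (top_of_set U) (Zset f \<inter> U)" "closedin (top_of_set U) (Zset f \<inter> U)"
      using Zset_clopen_in_dense_cozero_set f(1) by blast
    then show "\<exists>U. cozero_set U \<and> dense_set U \<and>
        openin (top_of_set U) (Z \<inter> U) \<and> closedin (top_of_set U) (Z \<inter> U)"
      using f(2) by blast
  qed
next
  assume ?clopen
  show ?complement
  proof
    fix f :: "'a \<Rightarrow> real" assume "f \<in> carrier Tpp"
    then have "Zset f \<in> Zpp"
      unfolding Zpp_def by simp
    then obtain U where "cozero_set U" "dense_set U"
      "openin (top_of_set U) (Zset f \<inter> U)" "closedin (top_of_set U) (Zset f \<inter> U)"
      using \<open>?clopen\<close> by blast
    then obtain g where "g \<in> Tpp_carrier" "Zset f = UNIV - Zset g"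
      by (rule Zset_complement_if_clopen_in_dense_cozero_set)
    then show "\<exists>g\<in>carrier Tpp. Zset f = UNIV - Zset g"
      by auto
  qed
qed

theorem theorem3p3:
  fixes R :: "('a::t1_space \<Rightarrow> real) ring"
  defines "R \<equiv> Tpp"
  defines "C1 \<equiv> regular_ring R"
    and "C2 \<equiv> (\<forall>P. primeideal P R \<longrightarrow> maximalideal P R)"
    and "C3 \<equiv> (\<forall>f \<in> carrier R. \<exists>g \<in> carrier R. Zset f = UNIV - Zset g)"
    and "C4 \<equiv> (\<forall>Z \<in> (Zpp :: 'a set set). \<exists>U::'a set. cozero_set U \<and> dense_set U \<and>
                 openin (top_of_set U) (Z \<inter> U) \<and> closedin (top_of_set U) (Z \<inter> U))"
    and "C5 \<equiv> (\<forall>I. ideal I R \<longrightarrow> z_ideal I R)"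
    and "C6 \<equiv> (\<forall>I. ideal I R \<longrightarrow>
                 (\<exists>\<P>. (\<forall>P \<in> \<P>. primeideal P R) \<and> I = carrier R \<inter> \<Inter>\<P>))"
    and "C7 \<equiv> (\<forall>I. ideal I R \<longrightarrow>
                 (\<exists>\<M>. (\<forall>M \<in> \<M>. maximalideal M R) \<and> I = carrier R \<inter> \<Inter>\<M>))"
    and "C8 \<equiv> (\<forall>f \<in> carrier R. \<forall>g \<in> carrier R.
                 Idl\<^bsub>R\<^esub> {f, g} = Idl\<^bsub>R\<^esub> {(f \<otimes>\<^bsub>R\<^esub> f) \<oplus>\<^bsub>R\<^esub> (g \<otimes>\<^bsub>R\<^esub> g)})"
    and "C9 \<equiv> (\<forall>f \<in> carrier R. \<exists>e \<in> carrier R.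
                 e \<otimes>\<^bsub>R\<^esub> e = e \<and> Idl\<^bsub>R\<^esub> {f} = Idl\<^bsub>R\<^esub> {e})"
  shows "(C1 \<longleftrightarrow> C2) \<and> (C1 \<longleftrightarrow> C3) \<and> (C1 \<longleftrightarrow> C4) \<and> (C1 \<longleftrightarrow> C5) \<and>
         (C1 \<longleftrightarrow> C6) \<and> (C1 \<longleftrightarrow> C7) \<and> (C1 \<longleftrightarrow> C8) \<and> (C1 \<longleftrightarrow> C9)"
proof -
  interpret cring R
    unfolding R_def by (rule cring_Tpp)
  have "reduced_ring R"
    unfolding R_def by (rule reduced_ring_Tpp)
  then have "C1 \<longleftrightarrow> C2"
    unfolding C1_def C2_def by (rule regular_ring_iff_primeideals_maximal)
  moreover have "C1 \<longleftrightarrow> C3" "C3 \<longleftrightarrow> C4"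
    unfolding C1_def C3_def C4_def R_def
    by (rule regular_ring_Tpp_iff_Zset_complement Zset_complement_iff_clopen_in_dense_cozero_set)+
  moreover have "C1 \<longleftrightarrow> C5"
    unfolding C1_def C5_def by (rule regular_ring_iff_ideals_z_ideals)
  moreover have "C1 \<longleftrightarrow> C6"
    unfolding C1_def C6_def by (rule regular_ring_iff_ideals_Inter_primeideals)
  moreover have "C1 \<longleftrightarrow> C7"
    unfolding C1_def C7_def by (rule regular_ring_iff_ideals_Inter_maximalideals)
  moreover have "\<forall>f\<in>carrier R. \<forall>g\<in>carrier R.
      f \<otimes>\<^bsub>R\<^esub> f \<oplus>\<^bsub>R\<^esub> g \<otimes>\<^bsub>R\<^esub> g = \<zero>\<^bsub>R\<^esub> \<longrightarrow> f = \<zero>\<^bsub>R\<^esub>"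
    unfolding R_def using Tpp_sum_squares_eq_zero by blast
  then have "C1 \<longleftrightarrow> C8"
    unfolding C1_def C8_def by (rule regular_ring_iff_Idl_pair_eq_Idl_sum_squares)
  moreover have "C1 \<longleftrightarrow> C9"
    unfolding C1_def C9_def by (rule regular_ring_iff_Idl_idempotent)
  ultimately show ?thesis
    by blast
qed

end
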